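(* Let $\mathbb M=(V,d)$ be a binary structure and let $A,B$ be robust modules of $\mathbb M$, each with at least two elements, such that $B\subsetneq A$, the Gallai quotients of $A$ and of $B$ are not prime, and $t(A)=t(B)$. Then there is a robust module $C$ with $B\subsetneq C\subsetneq A$ whose type is different from $t(A)$.
   Context: A binary structure over a set $W$ is a pair $\mathbb M=(V,d)$ with $d:V\times V\to W$. A module of $\mathbb M$ is a set $A\subseteq V$ such that $d(x,y)=d(x,y')$ and $d(y,x)=d(y',x)$ for all $x\in V\setminus A$ and $y,y'\in A$. A module is strong if for every module $B$, either $A\subseteq B$, $B\subseteq A$, or $A\cap B=\emptyset$. For $X\subseteq V$, $S_{\mathbb M}(X)$ is the intersection of all strong modules containing $X$. A module is robust if it is a singleton or equals $S_{\mathbb M}(\{x,y\})$ for some distinct $x,y\in V$. For a strong module $A$ and $x,y\in A$, put $x\equiv_A y$ iff $x=y$ or some strong module containing $x,y$ is properly contained in $A$; this is an equivalence relation whose classes (the components of $A$) are modules, and if $A$ is robust with at least two elements there are at least two components. For disjoint non-empty modules $X,Y$, $d(X,Y)$ denotes the common value of $d(x,y)$, $x\in X$, $y\in Y$. The Gallai quotient of a robust $A$ with $|A|\ge2$ is the binary structure on the set of components of $A$ given by $(I,J)\mapsto d(I,J)$ for $I\neq J$. It is prime if it has at least three elements and only trivial modules (empty, singletons, whole set). The type of $A$ is "prime" if its Gallai quotient is prime, and otherwise $t(A)$ is the set $\{d(I,J): I,J$ distinct components of $A\}$. *)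

theory Defs
  imports Main
begin

text \<open>A binary structure is a pair (V, d) with d : V x V -> W; we represent it by a
  carrier set V and a function d (only its values on V x V matter).\<close>

definition is_module :: "'a set \<Rightarrow> ('a \<Rightarrow> 'a \<Rightarrow> 'w) \<Rightarrow> 'a set \<Rightarrow> bool" where
  "is_module V d A \<longleftrightarrow> A \<subseteq> V \<and>
     (\<forall>x\<in>V - A. \<forall>y\<in>A. \<forall>y'\<in>A. d x y = d x y' \<and> d y x = d y' x)"

definition strong_module :: "'a set \<Rightarrow> ('a \<Rightarrow> 'a \<Rightarrow> 'w) \<Rightarrow> 'a set \<Rightarrow> bool" where
  "strong_module V d A \<longleftrightarrow> is_module V d A \<and>
     (\<forall>B. is_module V d B \<longrightarrow> A \<subseteq> B \<or> B \<subseteq> A \<or> A \<inter> B = {})"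

definition S_mod :: "'a set \<Rightarrow> ('a \<Rightarrow> 'a \<Rightarrow> 'w) \<Rightarrow> 'a set \<Rightarrow> 'a set" where
  "S_mod V d X = \<Inter>{A. strong_module V d A \<and> X \<subseteq> A}"

definition robust :: "'a set \<Rightarrow> ('a \<Rightarrow> 'a \<Rightarrow> 'w) \<Rightarrow> 'a set \<Rightarrow> bool" where
  "robust V d A \<longleftrightarrow> is_module V d A \<and>
     ((\<exists>x\<in>V. A = {x}) \<or> (\<exists>x\<in>V. \<exists>y\<in>V. x \<noteq> y \<and> A = S_mod V d {x, y}))"

definition comp_rel :: "'a set \<Rightarrow> ('a \<Rightarrow> 'a \<Rightarrow> 'w) \<Rightarrow> 'a set \<Rightarrow> 'a \<Rightarrow> 'a \<Rightarrow> bool" where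
  "comp_rel V d A x y \<longleftrightarrow> x \<in> A \<and> y \<in> A \<and>
     (x = y \<or> (\<exists>B. strong_module V d B \<and> x \<in> B \<and> y \<in> B \<and> B \<subset> A))"

definition components :: "'a set \<Rightarrow> ('a \<Rightarrow> 'a \<Rightarrow> 'w) \<Rightarrow> 'a set \<Rightarrow> 'a set set" where
  "components V d A = {{y \<in> A. comp_rel V d A x y} | x. x \<in> A}"

text \<open>d(X,Y) for disjoint nonempty modules: the common value of d(x,y).\<close>
definition dmod :: "('a \<Rightarrow> 'a \<Rightarrow> 'w) \<Rightarrow> 'a set \<Rightarrow> 'a set \<Rightarrow> 'w" where
  "dmod d X Y = d (SOME x. x \<in> X) (SOME y. y \<in> Y)"

definition gallai_d :: "('a \<Rightarrow> 'a \<Rightarrow> 'w) \<Rightarrow> 'a set \<Rightarrow> 'a set \<Rightarrow> 'w" where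
  "gallai_d d = dmod d"

definition prime_struct :: "'b set \<Rightarrow> ('b \<Rightarrow> 'b \<Rightarrow> 'w) \<Rightarrow> bool" where
  "prime_struct U e \<longleftrightarrow> (\<exists>a\<in>U. \<exists>b\<in>U. \<exists>c\<in>U. a \<noteq> b \<and> a \<noteq> c \<and> b \<noteq> c) \<and>
     (\<forall>X. is_module U e X \<longrightarrow> X = {} \<or> (\<exists>u. X = {u}) \<or> X = U)"

definition gallai_prime :: "'a set \<Rightarrow> ('a \<Rightarrow> 'a \<Rightarrow> 'w) \<Rightarrow> 'a set \<Rightarrow> bool" where
  "gallai_prime V d A \<longleftrightarrow> prime_struct (components V d A) (gallai_d d)"

datatype 'w mtype = Prime | Values "'w set"

definition type_of :: "'a set \<Rightarrow> ('a \<Rightarrow> 'a \<Rightarrow> 'w) \<Rightarrow> 'a set \<Rightarrow> 'w mtype" where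
  "type_of V d A = (if gallai_prime V d A then Prime
     else Values {dmod d I J | I J. I \<in> components V d A \<and> J \<in> components V d A \<and> I \<noteq> J})"

end

theory Submission
  imports Defs
begin

text \<open>By Gallai's theorem, a strong module \<open>C\<close> whose Gallai quotient is not prime has a complete
  or linear quotient: points of \<open>C\<close> in different components see each other with the values
  \<open>t(C)\<close>, and no triangle of components is cyclically oriented.

  Take \<open>B = S{b, b'}\<close>, let \<open>X\<close> be the component of \<open>A\<close> containing \<open>b\<close> (so \<open>B \<subseteq> X \<subset> A\<close>), and
  let \<open>D\<close> be the component of \<open>b\<close> in \<open>B\<close> if \<open>X = B\<close>, and \<open>D = B\<close> otherwise. Suppose every
  \<open>z \<in> X - D\<close> were separated from \<open>b\<close> by a strong module of type \<open>t(A)\<close>; the points of \<open>A - X\<close>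
  are separated from \<open>b\<close> by \<open>A\<close> itself. Then every \<open>z \<in> A - D\<close> sees \<open>b\<close> with the values \<open>t(A)\<close>,
  and two points seeing \<open>b\<close> in opposite orientations see each other as they see \<open>b\<close>. Hence \<open>D\<close>
  together with the points of one orientation, or else \<open>A - D\<close>, would be a module overlapping the
  strong module \<open>X\<close>. So some \<open>z \<in> X - D\<close> is not separated in this way: if \<open>X = B\<close> this
  contradicts \<open>t(B) = t(A)\<close>, and otherwise the robust module \<open>S{b, z}\<close> lies strictly between \<open>B\<close>
  and \<open>A\<close> and has a type different from \<open>t(A)\<close>.\<close>

section \<open>Modules and strong modules\<close>

lemma is_moduleI:
  assumes "M \<subseteq> P"
    and "\<And>x y y'. x \<in> P \<Longrightarrow> x \<notin> M \<Longrightarrow> y \<in> M \<Longrightarrow> y' \<in> M \<Longrightarrow> e x y = e x y' \<and> e y x = e y' x"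
  shows "is_module P e M"
  using assms unfolding is_module_def by blast

lemma is_moduleD:
  "is_module P e M \<Longrightarrow> x \<in> P \<Longrightarrow> x \<notin> M \<Longrightarrow> y \<in> M \<Longrightarrow> y' \<in> M \<Longrightarrow> e x y = e x y' \<and> e y x = e y' x"
  unfolding is_module_def by blast

lemma is_module_subset: "is_module P e M \<Longrightarrow> M \<subseteq> P"
  unfolding is_module_def by blast

lemma is_module_Inter:
  assumes "\<And>G. G \<in> F \<Longrightarrow> is_module P e G" and "F \<noteq> {}"
  shows "is_module P e (\<Inter>F)"
proof (rule is_moduleI)
  show "\<Inter>F \<subseteq> P" using assms is_module_subset by blast
  fix x y y' assume x: "x \<in> P" "x \<notin> \<Inter>F" and "y \<in> \<Inter>F" "y' \<in> \<Inter>F"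
  then obtain G where G: "G \<in> F" "x \<notin> G" and "y \<in> G" "y' \<in> G" by blast
  then show "e x y = e x y' \<and> e y x = e y' x" using is_moduleD[OF assms(1)[OF G(1)] x(1) G(2)] by blast
qed

lemma is_module_Union:
  assumes "\<And>G. G \<in> F \<Longrightarrow> is_module P e G" and "\<And>G. G \<in> F \<Longrightarrow> c \<in> G"
  shows "is_module P e (\<Union>F)"
proof (rule is_moduleI)
  show "\<Union>F \<subseteq> P" using assms is_module_subset by blast
  have "e x y = e x c \<and> e y x = e c x" if "x \<in> P" "x \<notin> \<Union>F" "y \<in> \<Union>F" for x y
  proof -
    from that obtain G where G: "G \<in> F" "y \<in> G" "x \<notin> G" by blast
    show ?thesis using is_moduleD[OF assms(1)[OF G(1)] \<open>x \<in> P\<close> G(3) G(2) assms(2)[OF G(1)]] .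
  qed
  then show "e x y = e x y' \<and> e y x = e y' x"
    if "x \<in> P" "x \<notin> \<Union>F" "y \<in> \<Union>F" "y' \<in> \<Union>F" for x y y'
    using that by metis
qed

lemma is_module_Un:
  assumes "is_module P e G" "is_module P e H" and "c \<in> G" "c \<in> H"
  shows "is_module P e (G \<union> H)"
  using is_module_Union[of "{G, H}" P e c] assms by auto

lemma is_module_Diff:
  assumes G: "is_module P e G" and H: "is_module P e H" and "\<not> H \<subseteq> G"
  shows "is_module P e (G - H)"
proof (rule is_moduleI)
  show "G - H \<subseteq> P" using is_module_subset[OF G] by blast
  fix x y y' assume x: "x \<in> P" "x \<notin> G - H" and y: "y \<in> G - H" "y' \<in> G - H"
  show "e x y = e x y' \<and> e y x = e y' x"
  proof (cases "x \<in> G")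
    case False
    then show ?thesis using is_moduleD[OF G x(1)] y by blast
  next
    case True
    then have "x \<in> H" using x by blast
    obtain c where c: "c \<in> H" "c \<notin> G" using \<open>\<not> H \<subseteq> G\<close> by blast
    have "y \<in> P" "y' \<in> P" "y \<notin> H" "y' \<notin> H" using y is_module_subset[OF G] by blast+
    \<comment> \<open>inside \<open>H\<close> the point \<open>x\<close> may be replaced by \<open>c\<close>, which lies outside \<open>G\<close>\<close>
    then have "e y x = e y c \<and> e x y = e c y" "e y' x = e y' c \<and> e x y' = e c y'"
      using is_moduleD[OF H _ _ \<open>x \<in> H\<close> c(1)] by blast+
    moreover have "e c y = e c y' \<and> e y c = e y' c"
      using is_moduleD[OF G _ c(2)] c(1) y is_module_subset[OF H] by (meson DiffD1 subsetD)
    ultimately show ?thesis by simp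
  qed
qed

lemma strong_module_is_module: "strong_module V d A \<Longrightarrow> is_module V d A"
  unfolding strong_module_def by blast

lemma strong_moduleD:
  "strong_module V d A \<Longrightarrow> is_module V d B \<Longrightarrow> A \<subseteq> B \<or> B \<subseteq> A \<or> A \<inter> B = {}"
  unfolding strong_module_def by blast

lemma strong_module_carrier: "strong_module V d V"
  unfolding strong_module_def is_module_def by blast

lemma strong_module_Inter:
  assumes strong: "\<And>A. A \<in> F \<Longrightarrow> strong_module V d A" and "F \<noteq> {}"
  shows "strong_module V d (\<Inter>F)"
  unfolding strong_module_def
proof (intro conjI allI impI)
  show "is_module V d (\<Inter>F)" by (rule is_module_Inter) (use assms strong_module_is_module in auto)
  fix B assume B: "is_module V d B"
  show "\<Inter>F \<subseteq> B \<or> B \<subseteq> \<Inter>F \<or> \<Inter>F \<inter> B = {}"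
  proof (cases "\<exists>A\<in>F. A \<subseteq> B \<or> A \<inter> B = {}")
    case True
    then show ?thesis by blast
  next
    case False
    then have "B \<subseteq> A" if "A \<in> F" for A using strong_moduleD[OF strong[OF that] B] that by blast
    then show ?thesis by blast
  qed
qed

lemma S_mod_superset: "X \<subseteq> S_mod V d X"
  unfolding S_mod_def by blast

lemma S_mod_least: "strong_module V d B \<Longrightarrow> X \<subseteq> B \<Longrightarrow> S_mod V d X \<subseteq> B"
  unfolding S_mod_def by blast

lemma strong_module_S_mod: "X \<subseteq> V \<Longrightarrow> strong_module V d (S_mod V d X)"
  unfolding S_mod_def by (rule strong_module_Inter) (use strong_module_carrier in auto)

lemma robust_two_points:
  assumes "robust V d C" and "x \<in> C" "y \<in> C" "x \<noteq> y"
  obtains a b where "a \<in> V" "b \<in> V" "a \<noteq> b" "C = S_mod V d {a, b}"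
  using assms unfolding robust_def by blast

section \<open>Overlapping modules\<close>

definition overlap :: "'b set \<Rightarrow> ('b \<Rightarrow> 'b \<Rightarrow> 'w) \<Rightarrow> 'b set \<Rightarrow> 'b set \<Rightarrow> bool" where
  "overlap P e G H \<longleftrightarrow> is_module P e G \<and> is_module P e H \<and> G \<inter> H \<noteq> {} \<and> \<not> G \<subseteq> H \<and> \<not> H \<subseteq> G"

definition nontrivial_module :: "'b set \<Rightarrow> ('b \<Rightarrow> 'b \<Rightarrow> 'w) \<Rightarrow> 'b set \<Rightarrow> bool" where
  "nontrivial_module P e M \<longleftrightarrow> is_module P e M \<and> (\<exists>a\<in>M. \<exists>b\<in>M. a \<noteq> b) \<and> M \<noteq> P"

lemma overlap_sym: "overlap P e G H \<Longrightarrow> overlap P e H G"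
  unfolding overlap_def by blast

lemma symp_overlap: "symp (overlap P e)"
  by (rule sympI) (rule overlap_sym)

lemma overlap_connected_sym: "(overlap P e)\<^sup>*\<^sup>* G H \<Longrightarrow> (overlap P e)\<^sup>*\<^sup>* H G"
  using sympD[OF symp_rtranclp[OF symp_overlap]] .

lemma overlap_connected_module:
  assumes "is_module P e M" and "(overlap P e)\<^sup>*\<^sup>* M G"
  shows "is_module P e G"
  using assms(2) by cases (use assms(1) overlap_def in auto)

lemma nontrivial_module_if_overlap:
  assumes "overlap P e G H"
  shows "nontrivial_module P e H"
proof -
  obtain a b where "a \<in> H" "b \<in> H" "a \<noteq> b" using assms unfolding overlap_def by blast
  moreover have "H \<noteq> P" using assms is_module_subset unfolding overlap_def by blast
  moreover have "is_module P e H" using assms unfolding overlap_def by blast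
  ultimately show ?thesis unfolding nontrivial_module_def by auto
qed

lemma overlap_connected_nontrivial:
  assumes "nontrivial_module P e M" and "(overlap P e)\<^sup>*\<^sup>* M G"
  shows "nontrivial_module P e G"
  using assms(2) by cases (use assms(1) nontrivial_module_if_overlap in auto)

lemma overlap_if_not_strong:
  "is_module P e N \<Longrightarrow> \<not> strong_module P e N \<Longrightarrow> \<exists>K. overlap P e N K"
  unfolding strong_module_def overlap_def by blast

lemma module_pair_eq:
  assumes "is_module P e M" "x \<in> P" "x \<notin> M" "y \<in> M" "y' \<in> M"
  shows "(e x y, e y x) = (e x y', e y' x)" and "(e y x, e x y) = (e y' x, e x y')"
  using is_moduleD[OF assms] by simp_all

text \<open>Across two overlapping modules \<open>G\<close> and \<open>H\<close> the ordered pair of values \<open>(e x y, e y x)\<close>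
  is the same for all \<open>x \<in> G\<close>, \<open>y \<in> H\<close> with \<open>x \<notin> H\<close> or \<open>y \<notin> G\<close>; we call it the signature
  of the overlap.\<close>

definition overlap_sig :: "('b \<Rightarrow> 'b \<Rightarrow> 'w) \<Rightarrow> 'b set \<Rightarrow> 'b set \<Rightarrow> 'w \<times> 'w" where
  "overlap_sig e G H = (let x = SOME x. x \<in> G - H; y = SOME y. y \<in> H - G in (e x y, e y x))"

lemma overlap_sig_eq:
  assumes GH: "overlap P e G H" and "x \<in> G" "y \<in> H" "x \<notin> H \<or> y \<notin> G"
  shows "(e x y, e y x) = overlap_sig e G H"
proof -
  have G: "is_module P e G" and H: "is_module P e H" using GH unfolding overlap_def by blast+
  define g where "g = (SOME x. x \<in> G - H)"
  define h where "h = (SOME y. y \<in> H - G)"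
  have "\<exists>x. x \<in> G - H" "\<exists>y. y \<in> H - G" using GH unfolding overlap_def by blast+
  then have g: "g \<in> G - H" and h: "h \<in> H - G" unfolding g_def h_def by (metis someI_ex)+
  have sig: "overlap_sig e G H = (e g h, e h g)" unfolding overlap_sig_def g_def h_def Let_def ..
  have P: "x \<in> P" "y \<in> P" "g \<in> P" "h \<in> P"
    using assms g h is_module_subset[OF G] is_module_subset[OF H] by blast+
  show ?thesis
  proof (cases "x \<notin> H")
    case True
    have "(e x y, e y x) = (e x h, e h x)" using module_pair_eq(1)[OF H P(1) True] assms(3) h by blast
    also have "\<dots> = (e g h, e h g)" using module_pair_eq(2)[OF G P(4) _ assms(2)] g h by blast
    finally show ?thesis using sig by simp
  next
    case False
    then have "y \<notin> G" using assms(4) by blast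
    have "(e x y, e y x) = (e g y, e y g)" using module_pair_eq(2)[OF G P(2) \<open>y \<notin> G\<close>] assms(2) g by blast
    also have "\<dots> = (e g h, e h g)" using module_pair_eq(1)[OF H P(3) _ assms(3)] g h by blast
    finally show ?thesis using sig by simp
  qed
qed

lemma overlap_sig_swap:
  assumes "overlap P e G H"
  shows "overlap_sig e H G = prod.swap (overlap_sig e G H)"
proof -
  obtain x y where "x \<in> G - H" "y \<in> H - G" using assms unfolding overlap_def by blast
  then show ?thesis
    using overlap_sig_eq[OF assms, of x y, symmetric] overlap_sig_eq[OF overlap_sym[OF assms], of y x, symmetric]
    by simp
qed

lemma overlap_sig_chain:
  assumes GH: "overlap P e G H" and HK: "overlap P e H K"
  shows "overlap_sig e H K \<in> {overlap_sig e G H, prod.swap (overlap_sig e G H)}"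
proof -
  obtain g k w w' where g: "g \<in> G - H" and k: "k \<in> K - H" and w: "w \<in> H \<inter> K" and w': "w' \<in> G \<inter> H"
    using GH HK unfolding overlap_def by blast
  show ?thesis
  proof (cases "g \<in> K \<or> k \<in> G")
    case True
    then show ?thesis
    proof
      assume "g \<in> K"
      then have "overlap_sig e H K = (e w g, e g w)" using overlap_sig_eq[OF HK] w g by auto
      moreover have "overlap_sig e G H = (e g w, e w g)" using overlap_sig_eq[OF GH] g w by auto
      ultimately show ?thesis by simp
    next
      assume "k \<in> G"
      then have "overlap_sig e G H = (e k w', e w' k)" using overlap_sig_eq[OF GH] k w' by auto
      moreover have "overlap_sig e H K = (e w' k, e k w')" using overlap_sig_eq[OF HK] k w' by auto
      ultimately show ?thesis by simp
    qed
  next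
    case False
    have G: "is_module P e G" and K: "is_module P e K" using GH HK unfolding overlap_def by blast+
    have "g \<in> P" "k \<in> P" using g k is_module_subset[OF G] is_module_subset[OF K] by blast+
    have "overlap_sig e H K = (e w' k, e k w')" using overlap_sig_eq[OF HK] k w' by auto
    also have "\<dots> = (e g k, e k g)" using module_pair_eq(2)[OF G \<open>k \<in> P\<close>] False g w' by blast
    also have "\<dots> = (e g w, e w g)" using module_pair_eq(1)[OF K \<open>g \<in> P\<close>] False k w by blast
    also have "\<dots> = overlap_sig e G H" using overlap_sig_eq[OF GH] g w by auto
    finally show ?thesis by simp
  qed
qed

lemma overlap_class_subset:
  assumes G0: "(overlap P e)\<^sup>*\<^sup>* M G0" "G0 \<subseteq> N" and G: "(overlap P e)\<^sup>*\<^sup>* M G"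
    and step: "\<And>G. (overlap P e)\<^sup>*\<^sup>* M G \<Longrightarrow> G \<inter> N \<noteq> {} \<Longrightarrow> \<not> N \<subseteq> G \<Longrightarrow> G \<subseteq> N"
  shows "G \<subseteq> N"
proof -
  have "(overlap P e)\<^sup>*\<^sup>* G0 G"
    using rtranclp_trans[OF overlap_connected_sym[OF G0(1)] G] .
  then show ?thesis
  proof (induction rule: rtranclp_induct)
    case base
    then show ?case using G0(2) .
  next
    case (step H H')
    have "(overlap P e)\<^sup>*\<^sup>* M H'"
      using rtranclp_trans[OF G0(1) rtranclp.rtrancl_into_rtrancl[OF step(1,2)]] .
    moreover have "H' \<inter> N \<noteq> {}" "\<not> N \<subseteq> H'" using step(2,3) unfolding overlap_def by blast+
    ultimately show ?case using assms(4) by blast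
  qed
qed

lemma overlap_class_Union_module:
  assumes M: "is_module P e M" and m: "m \<in> M"
  shows "is_module P e (\<Union>{G. (overlap P e)\<^sup>*\<^sup>* M G})" (is "is_module P e ?U")
proof (rule is_moduleI)
  show "?U \<subseteq> P" using overlap_connected_module[OF M] is_module_subset by blast
  have pair: "(e z g, e g z) = (e z m, e m z)"
    if "(overlap P e)\<^sup>*\<^sup>* M G" "z \<in> P" "z \<notin> ?U" "g \<in> G" for G z g
    using that(1,4)
  proof (induction arbitrary: g rule: rtranclp_induct)
    case base
    then have "z \<notin> M" using that(3) by blast
    then show ?case using module_pair_eq(1)[OF M that(2)] base m by blast
  next
    case (step H H')
    obtain w where w: "w \<in> H" "w \<in> H'" using step(2) unfolding overlap_def by blast
    have "z \<notin> H'" using that(3) rtranclp.rtrancl_into_rtrancl[OF step(1,2)] by blast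
    then have "(e z g, e g z) = (e z w, e w z)"
      using module_pair_eq(1)[of P e H' z g w] step(2,4) w(2) that(2) unfolding overlap_def by blast
    then show ?case using step.IH[OF w(1)] by simp
  qed
  fix z y y' assume z: "z \<in> P" "z \<notin> ?U" and "y \<in> ?U" "y' \<in> ?U"
  then obtain G G' where "(overlap P e)\<^sup>*\<^sup>* M G" "y \<in> G" "(overlap P e)\<^sup>*\<^sup>* M G'" "y' \<in> G'" by blast
  then have "(e z y, e y z) = (e z m, e m z)" "(e z y', e y' z) = (e z m, e m z)" using pair z by blast+
  then show "e z y = e z y' \<and> e y z = e y' z" by simp
qed

lemma strong_module_overlap_class_Union:
  assumes M: "is_module P e M" and m: "m \<in> M"
  shows "strong_module P e (\<Union>{G. (overlap P e)\<^sup>*\<^sup>* M G})" (is "strong_module P e ?U")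
  unfolding strong_module_def
proof (intro conjI allI impI)
  show "is_module P e ?U" using overlap_class_Union_module[OF M m] .
  fix K assume K: "is_module P e K"
  show "?U \<subseteq> K \<or> K \<subseteq> ?U \<or> ?U \<inter> K = {}"
  proof (rule ccontr)
    assume not_comparable: "\<not> ?thesis"
    then obtain G0 where G0: "(overlap P e)\<^sup>*\<^sup>* M G0" "G0 \<inter> K \<noteq> {}" and KU: "\<not> K \<subseteq> ?U"
      by blast
    have inside: "G \<subseteq> K" if "(overlap P e)\<^sup>*\<^sup>* M G" "G \<inter> K \<noteq> {}" "\<not> K \<subseteq> G" for G
    proof (rule ccontr)
      assume "\<not> G \<subseteq> K"
      then have "overlap P e G K"
        using that overlap_connected_module[OF M that(1)] K unfolding overlap_def by blast
      then have "K \<subseteq> ?U" using rtranclp.rtrancl_into_rtrancl[OF that(1)] by blast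
      then show False using KU by blast
    qed
    have "G0 \<subseteq> K" using inside[OF G0] KU G0(1) by blast
    then have "?U \<subseteq> K" using overlap_class_subset[OF G0(1)] inside by blast
    then show False using not_comparable by blast
  qed
qed

lemma overlap_not_splitting_closed_triple:
  assumes closed: "\<And>M u v. is_module P e M \<Longrightarrow> u \<in> T \<Longrightarrow> v \<in> T \<Longrightarrow> u \<in> M \<Longrightarrow> v \<in> M \<Longrightarrow> u \<noteq> v
      \<Longrightarrow> T \<subseteq> M"
    and LK: "overlap P e L K" and u: "u \<in> T" "u \<in> L" and v: "v \<in> T" "v \<in> K - L"
    and w: "w \<in> T" "w \<noteq> u" "w \<noteq> v"
  shows False
proof -
  have L: "is_module P e L" and K: "is_module P e K" using LK unfolding overlap_def by blast+
  have "u \<noteq> v" using u v by blast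
  have "w \<notin> L" using closed[OF L u(1) w(1) u(2)] w(2) v by blast
  obtain c where "c \<in> L" "c \<in> K" using LK unfolding overlap_def by blast
  then have "T \<subseteq> L \<union> K" using closed[OF is_module_Un[OF L K] u(1) v(1)] u(2) v(2) \<open>u \<noteq> v\<close> by blast
  then have "w \<in> K - L" using w(1) \<open>w \<notin> L\<close> by blast
  moreover have "is_module P e (K - L)" using is_module_Diff[OF K L] LK unfolding overlap_def by blast
  ultimately have "T \<subseteq> K - L" using closed[of "K - L" v w] v w by blast
  then show False using u by blast
qed

section \<open>Structures whose strong modules are trivial\<close>

text \<open>Complete or linear structures: all pairs of distinct points carry the same two values up to
  orientation, and there is no cyclically oriented triangle.\<close>

definition degenerate :: "'b set \<Rightarrow> ('b \<Rightarrow> 'b \<Rightarrow> 'w) \<Rightarrow> bool" where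
  "degenerate P e \<longleftrightarrow>
     (\<exists>\<sigma>. \<forall>x\<in>P. \<forall>y\<in>P. x \<noteq> y \<longrightarrow> (e x y, e y x) \<in> {\<sigma>, prod.swap \<sigma>}) \<and>
     (\<forall>x\<in>P. \<forall>y\<in>P. \<forall>z\<in>P. x \<noteq> y \<longrightarrow> y \<noteq> z \<longrightarrow> x \<noteq> z \<longrightarrow>
        (e x y, e y x) = (e x z, e z x) \<or> (e x y, e y x) = (e z y, e y z))"

lemma degenerate_pairsE:
  assumes "degenerate P e"
  obtains \<sigma> where "\<And>x y. x \<in> P \<Longrightarrow> y \<in> P \<Longrightarrow> x \<noteq> y \<Longrightarrow> (e x y, e y x) \<in> {\<sigma>, prod.swap \<sigma>}"
  using assms unfolding degenerate_def by metis

lemma degenerate_triangleD: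
  assumes "degenerate P e" "x \<in> P" "y \<in> P" "z \<in> P" "x \<noteq> y" "y \<noteq> z" "x \<noteq> z"
  shows "(e x y, e y x) = (e x z, e z x) \<or> (e x y, e y x) = (e z y, e y z)"
  using assms unfolding degenerate_def by metis

text \<open>Gallai's argument: any two nontrivial modules are linked by a chain of overlaps, since the
  union of all modules reachable from one of them by overlaps is strong; along a chain the signature
  of the overlaps is preserved up to orientation; and any two points are separated by some overlap,
  so their values form that signature.\<close>

locale only_trivial_strong_modules =
  fixes P :: "'b set" and e :: "'b \<Rightarrow> 'b \<Rightarrow> 'w"
  assumes strong_module_two_points:
      "\<And>S a b. strong_module P e S \<Longrightarrow> a \<in> S \<Longrightarrow> b \<in> S \<Longrightarrow> a \<noteq> b \<Longrightarrow> S = P"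
    and nontrivial_module_exists: "\<exists>M. nontrivial_module P e M"
begin

lemma nontrivial_module_overlap:
  assumes "nontrivial_module P e M"
  obtains K where "overlap P e M K"
proof -
  have "\<not> strong_module P e M"
    using assms strong_module_two_points unfolding nontrivial_module_def by blast
  moreover have "is_module P e M" using assms unfolding nontrivial_module_def by blast
  ultimately show ?thesis using that overlap_if_not_strong by blast
qed

lemma overlap_class_Union_eq:
  assumes "nontrivial_module P e M"
  shows "\<Union>{G. (overlap P e)\<^sup>*\<^sup>* M G} = P"
proof -
  obtain a b where ab: "a \<in> M" "b \<in> M" "a \<noteq> b" and M: "is_module P e M"
    using assms unfolding nontrivial_module_def by blast
  have "a \<in> \<Union>{G. (overlap P e)\<^sup>*\<^sup>* M G}" "b \<in> \<Union>{G. (overlap P e)\<^sup>*\<^sup>* M G}" using ab by blast+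
  then show ?thesis using strong_module_two_points[OF strong_module_overlap_class_Union[OF M ab(1)]] ab(3)
    by blast
qed

lemma nontrivial_module_inside_unconnected:
  assumes M: "nontrivial_module P e M" and N: "nontrivial_module P e N"
    and MN: "\<not> (overlap P e)\<^sup>*\<^sup>* M N" and G: "(overlap P e)\<^sup>*\<^sup>* M G" "G \<inter> N \<noteq> {}"
  shows "N \<subseteq> G"
proof (rule ccontr)
  assume "\<not> N \<subseteq> G"
  have inside: "H \<subseteq> N" if H: "(overlap P e)\<^sup>*\<^sup>* M H" "H \<inter> N \<noteq> {}" "\<not> N \<subseteq> H" for H
  proof (rule ccontr)
    assume "\<not> H \<subseteq> N"
    then have "overlap P e H N" using H overlap_connected_nontrivial[OF M H(1)] N
      unfolding overlap_def nontrivial_module_def by blast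
    then show False using MN rtranclp.rtrancl_into_rtrancl[OF H(1)] by blast
  qed
  have "\<Union>{G. (overlap P e)\<^sup>*\<^sup>* M G} \<subseteq> N"
    using overlap_class_subset[OF G(1) inside[OF G \<open>\<not> N \<subseteq> G\<close>]] inside by blast
  then show False using overlap_class_Union_eq[OF M] N is_module_subset
    unfolding nontrivial_module_def by blast
qed

lemma nontrivial_modules_overlap_connected:
  assumes M: "nontrivial_module P e M" and N: "nontrivial_module P e N"
  shows "(overlap P e)\<^sup>*\<^sup>* M N"
proof (rule ccontr)
  assume MN: "\<not> (overlap P e)\<^sup>*\<^sup>* M N"
  obtain n where "n \<in> N" using N unfolding nontrivial_module_def by blast
  then have "n \<in> \<Union>{G. (overlap P e)\<^sup>*\<^sup>* M G}"
    using overlap_class_Union_eq[OF M] N is_module_subset unfolding nontrivial_module_def by blast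
  then obtain G where G: "(overlap P e)\<^sup>*\<^sup>* M G" "n \<in> G" by blast
  have "\<not> (overlap P e)\<^sup>*\<^sup>* N G" using MN G(1) overlap_connected_sym rtranclp_trans by metis
  then have "G \<subseteq> N"
    using nontrivial_module_inside_unconnected[OF N overlap_connected_nontrivial[OF M G(1)]]
      \<open>n \<in> N\<close> G(2) by blast
  moreover have "N \<subseteq> G" using nontrivial_module_inside_unconnected[OF M N MN G(1)] \<open>n \<in> N\<close> G(2) by blast
  ultimately have "G = N" by blast
  then show False using MN G(1) by blast
qed

lemma overlap_sig_uniform: "\<exists>\<sigma>. \<forall>G K. overlap P e G K \<longrightarrow> overlap_sig e G K \<in> {\<sigma>, prod.swap \<sigma>}"
proof -
  obtain M0 where M0: "nontrivial_module P e M0" using nontrivial_module_exists by blast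
  obtain H0 where H0: "overlap P e M0 H0" using nontrivial_module_overlap[OF M0] .
  define \<sigma> where "\<sigma> = overlap_sig e M0 H0"
  have "overlap_sig e G K \<in> {\<sigma>, prod.swap \<sigma>}" if "(overlap P e)\<^sup>*\<^sup>* M0 G" "overlap P e G K" for G K
    using that
  proof (induction arbitrary: K rule: rtranclp_induct)
    case base
    have "overlap_sig e H0 M0 = prod.swap \<sigma>" using overlap_sig_swap[OF H0] unfolding \<sigma>_def .
    then show ?case using overlap_sig_chain[OF overlap_sym[OF H0] base] by auto
  next
    case (step G G')
    have "overlap_sig e G G' \<in> {\<sigma>, prod.swap \<sigma>}" using step.IH step.hyps(2) by blast
    moreover have "overlap_sig e G' K \<in> {overlap_sig e G G', prod.swap (overlap_sig e G G')}"
      using overlap_sig_chain[OF step.hyps(2) step.prems] .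
    ultimately show ?case by auto
  qed
  moreover have "(overlap P e)\<^sup>*\<^sup>* M0 G" if "overlap P e G K" for G K
    using nontrivial_modules_overlap_connected[OF M0 nontrivial_module_if_overlap[OF overlap_sym[OF that]]] .
  ultimately show ?thesis by blast
qed

lemma separating_nontrivial_module:
  assumes "x \<in> P" "y \<in> P" "x \<noteq> y"
  shows "\<exists>N. nontrivial_module P e N \<and> (x \<in> N \<longleftrightarrow> y \<notin> N)"
proof (rule ccontr)
  assume "\<not> ?thesis"
  then have together: "x \<in> N \<longleftrightarrow> y \<in> N" if "nontrivial_module P e N" for N using that by blast
  define F where "F = {N. nontrivial_module P e N \<and> x \<in> N}"
  obtain M0 where M0: "nontrivial_module P e M0" using nontrivial_module_exists by blast
  then obtain G0 where "(overlap P e)\<^sup>*\<^sup>* M0 G0" "x \<in> G0"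
    using overlap_class_Union_eq[OF M0] assms(1) by blast
  then have G0: "G0 \<in> F" unfolding F_def using overlap_connected_nontrivial[OF M0] by blast
  have F_modules: "is_module P e N" if "N \<in> F" for N using that unfolding F_def nontrivial_module_def by blast
  define I where "I = \<Inter>F"
  have I: "is_module P e I" unfolding I_def using is_module_Inter F_modules G0 by blast
  have xy: "x \<in> I" "y \<in> I" unfolding I_def F_def using together by blast+
  have "I \<subseteq> P" "I \<noteq> P"
    using G0 is_module_subset[OF F_modules[OF G0]] unfolding I_def F_def nontrivial_module_def by blast+
  \<comment> \<open>\<open>I\<close> is a strong module, since every module overlapping it would yield a smaller member of \<open>F\<close>\<close>
  have "strong_module P e I"
    unfolding strong_module_def
  proof (intro conjI allI impI I)
    fix K assume K: "is_module P e K"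
    show "I \<subseteq> K \<or> K \<subseteq> I \<or> I \<inter> K = {}"
    proof (rule ccontr)
      assume nc: "\<not> ?thesis"
      then obtain u v where uv: "u \<in> I" "u \<in> K" "v \<in> K" "v \<notin> I" by blast
      show False
      proof (cases "x \<in> K \<or> y \<in> K")
        case True
        have "u \<noteq> v" "K \<noteq> P" using uv nc \<open>I \<subseteq> P\<close> by blast+
        then have "nontrivial_module P e K" unfolding nontrivial_module_def using K uv by blast
        then have "K \<in> F" unfolding F_def using True together by blast
        then show False using nc unfolding I_def by blast
      next
        case False
        have "is_module P e (I - K)" using is_module_Diff[OF I K] nc by blast
        moreover have "I - K \<noteq> P" using \<open>I \<subseteq> P\<close> \<open>I \<noteq> P\<close> by blast
        ultimately have "nontrivial_module P e (I - K)"
          unfolding nontrivial_module_def using xy False assms(3) by blast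
        then have "I - K \<in> F" unfolding F_def using xy False by blast
        then show False using uv unfolding I_def by blast
      qed
    qed
  qed
  then show False using strong_module_two_points xy assms(3) \<open>I \<noteq> P\<close> by blast
qed

lemma separating_overlap:
  assumes y: "y \<in> P" and N: "nontrivial_module P e N" "x \<in> N" "y \<notin> N"
  obtains L K where "overlap P e L K" "x \<in> L" "y \<in> K - L"
proof -
  define L where "L = \<Union>{G. is_module P e G \<and> x \<in> G \<and> y \<notin> G}"
  have L: "is_module P e L" unfolding L_def by (rule is_module_Union[where c = x]) blast+
  have "N \<subseteq> L" "y \<notin> L" unfolding L_def using N unfolding nontrivial_module_def by blast+
  then have "nontrivial_module P e L" using L y N unfolding nontrivial_module_def by blast
  then obtain K where LK: "overlap P e L K" by (rule nontrivial_module_overlap)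
  have "y \<in> K"
  proof (rule ccontr)
    assume "y \<notin> K"
    obtain c where "c \<in> L" "c \<in> K" using LK unfolding overlap_def by blast
    then have "is_module P e (L \<union> K)" using is_module_Un[OF L] LK unfolding overlap_def by blast
    then have "L \<union> K \<subseteq> L" using \<open>y \<notin> K\<close> \<open>y \<notin> L\<close> \<open>N \<subseteq> L\<close> N(2) unfolding L_def by blast
    then show False using LK unfolding overlap_def by blast
  qed
  then show ?thesis using that LK \<open>N \<subseteq> L\<close> N(2) \<open>y \<notin> L\<close> by blast
qed

lemma separating_overlap_either_way:
  assumes "x \<in> P" "y \<in> P" "x \<noteq> y"
  obtains L K where "overlap P e L K" "x \<in> L \<and> y \<in> K - L \<or> y \<in> L \<and> x \<in> K - L"
proof -
  obtain N where N: "nontrivial_module P e N" "x \<in> N \<longleftrightarrow> y \<notin> N"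
    using separating_nontrivial_module[OF assms] by blast
  show ?thesis
  proof (cases "x \<in> N")
    case True
    then show ?thesis using separating_overlap[OF assms(2) N(1)] N(2) that by blast
  next
    case False
    then show ?thesis using separating_overlap[OF assms(1) N(1)] N(2) that by blast
  qed
qed

lemma pair_values_uniform: "\<exists>\<sigma>. \<forall>x\<in>P. \<forall>y\<in>P. x \<noteq> y \<longrightarrow> (e x y, e y x) \<in> {\<sigma>, prod.swap \<sigma>}"
proof -
  obtain \<sigma> where \<sigma>: "\<And>G K. overlap P e G K \<Longrightarrow> overlap_sig e G K \<in> {\<sigma>, prod.swap \<sigma>}"
    using overlap_sig_uniform by blast
  have "(e x y, e y x) \<in> {\<sigma>, prod.swap \<sigma>}" if xy: "x \<in> P" "y \<in> P" "x \<noteq> y" for x y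
  proof -
    obtain L K where LK: "overlap P e L K" "x \<in> L \<and> y \<in> K - L \<or> y \<in> L \<and> x \<in> K - L"
      using separating_overlap_either_way[OF xy] .
    then have "(e x y, e y x) = overlap_sig e L K \<or> (e y x, e x y) = overlap_sig e L K"
      using overlap_sig_eq[OF LK(1)] by blast
    then have "overlap_sig e L K \<in> {(e x y, e y x), (e y x, e x y)}" by auto
    then show ?thesis using \<sigma>[OF LK(1)] by (cases \<sigma>) auto
  qed
  then show ?thesis by blast
qed

lemma no_cyclic_triangle:
  assumes "x \<in> P" "y \<in> P" "z \<in> P" "a \<noteq> b"
    and "(e x y, e y x) = (a, b)" "(e y z, e z y) = (a, b)" "(e z x, e x z) = (a, b)"
  shows False
proof -
  have distinct: "x \<noteq> y" "y \<noteq> z" "x \<noteq> z" using assms(4-7) by auto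
  \<comment> \<open>the third point sees the other two differently, so it lies in every module containing them\<close>
  have closed: "{x, y, z} \<subseteq> M"
    if M: "is_module P e M" and "u \<in> {x, y, z}" "v \<in> {x, y, z}" "u \<in> M" "v \<in> M" "u \<noteq> v" for M u v
  proof (rule ccontr)
    assume "\<not> {x, y, z} \<subseteq> M"
    then obtain w where w: "w \<in> {x, y, z}" "w \<notin> M" by blast
    then have "e w u = e w v" "e u w = e v w"
      using is_moduleD[OF M _ w(2) that(4,5)] assms(1-3) by blast+
    then show False using that(2,3,6) w assms(4-7) by auto
  qed
  obtain L K where LK: "overlap P e L K" "x \<in> L \<and> y \<in> K - L \<or> y \<in> L \<and> x \<in> K - L"
    using separating_overlap_either_way[OF assms(1,2) distinct(1)] .
  from LK(2) show False
  proof
    assume "x \<in> L \<and> y \<in> K - L"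
    then show False
      by (intro overlap_not_splitting_closed_triple[OF closed LK(1), where u = x and v = y and w = z])
        (use distinct in auto)
  next
    assume "y \<in> L \<and> x \<in> K - L"
    then show False
      by (intro overlap_not_splitting_closed_triple[OF closed LK(1), where u = y and v = x and w = z])
        (use distinct in auto)
  qed
qed

theorem degenerate: "degenerate P e"
proof -
  obtain \<sigma> where \<sigma>: "\<forall>x\<in>P. \<forall>y\<in>P. x \<noteq> y \<longrightarrow> (e x y, e y x) \<in> {\<sigma>, prod.swap \<sigma>}"
    using pair_values_uniform by blast
  obtain a b where ab: "\<sigma> = (a, b)" by fastforce
  have "(e x y, e y x) = (e x z, e z x) \<or> (e x y, e y x) = (e z y, e y z)"
    if "x \<in> P" "y \<in> P" "z \<in> P" "x \<noteq> y" "y \<noteq> z" "x \<noteq> z" for x y z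
  proof (rule ccontr)
    assume not_transitive: "\<not> ?thesis"
    have pairs: "(e x y, e y x) \<in> {(a, b), (b, a)}" "(e x z, e z x) \<in> {(a, b), (b, a)}"
      "(e z y, e y z) \<in> {(a, b), (b, a)}" using \<sigma> that ab by auto
    show False
    proof (cases "(e x y, e y x) = (a, b)")
      case True
      then have "a \<noteq> b" "(e y z, e z y) = (a, b)" "(e z x, e x z) = (a, b)"
        using pairs not_transitive by auto
      then show False using no_cyclic_triangle[OF that(1-3) _ True] by blast
    next
      case False
      then have "a \<noteq> b" "(e y x, e x y) = (a, b)" "(e x z, e z x) = (a, b)" "(e z y, e y z) = (a, b)"
        using pairs not_transitive by auto
      then show False using no_cyclic_triangle[OF that(2,1,3)] by blast
    qed
  qed
  then show ?thesis unfolding degenerate_def using \<sigma> by blast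
qed

end

lemma degenerate_if_only_trivial_strong_modules:
  assumes "\<And>S a b. strong_module P e S \<Longrightarrow> a \<in> S \<Longrightarrow> b \<in> S \<Longrightarrow> a \<noteq> b \<Longrightarrow> S = P"
    and "\<not> prime_struct P e"
  shows "degenerate P e"
proof (cases "\<exists>a\<in>P. \<exists>b\<in>P. \<exists>c\<in>P. a \<noteq> b \<and> a \<noteq> c \<and> b \<noteq> c")
  case True
  then obtain X where X: "is_module P e X" "X \<noteq> {}" "\<nexists>u. X = {u}" "X \<noteq> P"
    using assms(2) unfolding prime_struct_def by blast
  then have "nontrivial_module P e X" unfolding nontrivial_module_def by fast
  with assms(1) interpret only_trivial_strong_modules P e by unfold_locales blast+
  show ?thesis by (rule degenerate)
next
  case at_most_two: False
  have "\<exists>\<sigma>. \<forall>x\<in>P. \<forall>y\<in>P. x \<noteq> y \<longrightarrow> (e x y, e y x) \<in> {\<sigma>, prod.swap \<sigma>}"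
  proof (cases "\<exists>x0\<in>P. \<exists>y0\<in>P. x0 \<noteq> y0")
    case True
    then obtain x0 y0 where "x0 \<in> P" "y0 \<in> P" "x0 \<noteq> y0" by blast
    then have "x \<in> {x0, y0}" if "x \<in> P" for x using at_most_two that by auto
    then have "x = x0 \<and> y = y0 \<or> x = y0 \<and> y = x0" if "x \<in> P" "y \<in> P" "x \<noteq> y" for x y
      using that by auto
    then show ?thesis by (intro exI[of _ "(e x0 y0, e y0 x0)"]) auto
  qed blast
  then show ?thesis unfolding degenerate_def using at_most_two by blast
qed

section \<open>Components and the Gallai quotient\<close>

lemma comp_rel_sym: "comp_rel V d C x y \<Longrightarrow> comp_rel V d C y x"
  unfolding comp_rel_def by blast

lemma comp_rel_if_strong_psubset:
  "strong_module V d B \<Longrightarrow> B \<subset> C \<Longrightarrow> x \<in> B \<Longrightarrow> y \<in> B \<Longrightarrow> comp_rel V d C x y"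
  unfolding comp_rel_def by blast

lemma comp_rel_trans:
  assumes xy: "comp_rel V d C x y" and yz: "comp_rel V d C y z"
  shows "comp_rel V d C x z"
proof (cases "x = y \<or> y = z")
  case True
  then show ?thesis using xy yz by blast
next
  case False
  then obtain B1 B2 where B1: "strong_module V d B1" "x \<in> B1" "y \<in> B1" "B1 \<subset> C"
    and B2: "strong_module V d B2" "y \<in> B2" "z \<in> B2" "B2 \<subset> C"
    using xy yz unfolding comp_rel_def by blast
  then have "B1 \<subseteq> B2 \<or> B2 \<subseteq> B1" using strong_moduleD[OF B1(1) strong_module_is_module[OF B2(1)]] by blast
  then show ?thesis
  proof
    assume "B1 \<subseteq> B2"
    then show ?thesis using comp_rel_if_strong_psubset[OF B2(1,4)] B1(2) B2(3) by blast
  next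
    assume "B2 \<subseteq> B1"
    then show ?thesis using comp_rel_if_strong_psubset[OF B1(1,4) B1(2)] B2(3) by blast
  qed
qed

lemma not_comp_rel_S_mod:
  assumes "a \<noteq> b"
  shows "\<not> comp_rel V d (S_mod V d {a, b}) a b"
proof
  assume "comp_rel V d (S_mod V d {a, b}) a b"
  then obtain B where "strong_module V d B" "a \<in> B" "b \<in> B" "B \<subset> S_mod V d {a, b}"
    using assms unfolding comp_rel_def by blast
  then show False using S_mod_least[of V d B "{a, b}"] by blast
qed

definition component_of :: "'a set \<Rightarrow> ('a \<Rightarrow> 'a \<Rightarrow> 'w) \<Rightarrow> 'a set \<Rightarrow> 'a \<Rightarrow> 'a set" where
  "component_of V d C x = {y \<in> C. comp_rel V d C x y}"

lemma components_eq_image: "components V d C = component_of V d C ` C"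
  unfolding components_def component_of_def by blast

lemma mem_component_of_iff: "y \<in> component_of V d C x \<longleftrightarrow> comp_rel V d C x y"
  unfolding component_of_def comp_rel_def by blast

lemma component_of_self: "x \<in> C \<Longrightarrow> x \<in> component_of V d C x"
  unfolding component_of_def comp_rel_def by blast

lemma component_of_subset: "component_of V d C x \<subseteq> C"
  unfolding component_of_def by blast

lemma component_of_eq:
  assumes "comp_rel V d C x y"
  shows "component_of V d C x = component_of V d C y"
proof -
  have "comp_rel V d C x z \<longleftrightarrow> comp_rel V d C y z" for z
    using comp_rel_trans[OF assms] comp_rel_trans[OF comp_rel_sym[OF assms]] by blast
  then show ?thesis unfolding set_eq_iff mem_component_of_iff by blast
qed

lemma component_of_eq_iff:
  assumes "y \<in> C"
  shows "component_of V d C x = component_of V d C y \<longleftrightarrow> comp_rel V d C x y"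
proof
  assume "component_of V d C x = component_of V d C y"
  then have "y \<in> component_of V d C x" using component_of_self[OF assms] by metis
  then show "comp_rel V d C x y" unfolding mem_component_of_iff .
qed (rule component_of_eq)

lemma strong_module_component_of:
  assumes C: "is_module V d C" and x: "x \<in> C"
  shows "strong_module V d (component_of V d C x)" (is "strong_module V d ?X")
proof -
  \<comment> \<open>two points of \<open>?X\<close> lie in a strong module properly inside \<open>C\<close>, which is contained in \<open>?X\<close>\<close>
  have small: "\<exists>B. strong_module V d B \<and> y \<in> B \<and> y' \<in> B \<and> B \<subseteq> ?X"
    if y: "y \<in> ?X" "y' \<in> ?X" "y \<noteq> y'" for y y'
  proof -
    have "comp_rel V d C y y'"
      using y comp_rel_sym comp_rel_trans unfolding mem_component_of_iff by metis
    then obtain B where B: "strong_module V d B" "y \<in> B" "y' \<in> B" "B \<subset> C"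
      using y(3) unfolding comp_rel_def by blast
    have "B \<subseteq> ?X"
    proof
      fix b assume "b \<in> B"
      then have "comp_rel V d C y b" using comp_rel_if_strong_psubset[OF B(1,4) B(2)] by blast
      then show "b \<in> ?X" using comp_rel_trans y(1) unfolding mem_component_of_iff by metis
    qed
    then show ?thesis using B by blast
  qed
  have X: "is_module V d ?X"
  proof (rule is_moduleI)
    show "?X \<subseteq> V" using component_of_subset[of V d C x] is_module_subset[OF C] by blast
    fix w y y' assume w: "w \<in> V" "w \<notin> ?X" and y: "y \<in> ?X" "y' \<in> ?X"
    show "d w y = d w y' \<and> d y w = d y' w"
    proof (cases "y = y'")
      case False
      then obtain B where B: "strong_module V d B" "y \<in> B" "y' \<in> B" "B \<subseteq> ?X" using small y by blast
      then show ?thesis using is_moduleD[OF strong_module_is_module[OF B(1)] w(1)] w(2) by blast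
    qed simp
  qed
  show ?thesis
    unfolding strong_module_def
  proof (intro conjI allI impI X)
    fix N assume N: "is_module V d N"
    show "?X \<subseteq> N \<or> N \<subseteq> ?X \<or> ?X \<inter> N = {}"
    proof (rule ccontr)
      assume "\<not> ?thesis"
      then obtain y u where "y \<in> N" "y \<in> ?X" "u \<in> ?X" "u \<notin> N" "\<not> N \<subseteq> ?X" by blast
      moreover obtain B where "strong_module V d B" "y \<in> B" "u \<in> B" "B \<subseteq> ?X"
        using small calculation by blast
      ultimately show False using strong_moduleD[OF _ N, of B] by blast
    qed
  qed
qed

lemma subset_component_of:
  assumes "strong_module V d B" "B \<subset> C" "x \<in> B"
  shows "B \<subseteq> component_of V d C x"
  unfolding subset_iff mem_component_of_iff using comp_rel_if_strong_psubset[OF assms] by blast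

lemma component_of_S_mod_neq:
  assumes "a \<noteq> b"
  shows "component_of V d (S_mod V d {a, b}) x \<noteq> S_mod V d {a, b}"
proof
  assume eq: "component_of V d (S_mod V d {a, b}) x = S_mod V d {a, b}"
  have "a \<in> S_mod V d {a, b}" "b \<in> S_mod V d {a, b}" using S_mod_superset[of "{a, b}" V d] by blast+
  then have "comp_rel V d (S_mod V d {a, b}) x a" "comp_rel V d (S_mod V d {a, b}) x b"
    using eq unfolding mem_component_of_iff[symmetric] by simp_all
  then show False using not_comp_rel_S_mod[OF assms] comp_rel_trans[OF comp_rel_sym] by metis
qed

lemma component_of_mem_components: "x \<in> C \<Longrightarrow> component_of V d C x \<in> components V d C"
  unfolding components_eq_image by blast

lemma components_nonempty: "I \<in> components V d C \<Longrightarrow> I \<noteq> {}"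
  unfolding components_eq_image using component_of_self by (metis empty_iff imageE)

lemma components_eq_component_of:
  assumes "I \<in> components V d C" "x \<in> I"
  shows "I = component_of V d C x"
proof -
  obtain x0 where I: "I = component_of V d C x0" using assms(1) unfolding components_eq_image by blast
  then have "comp_rel V d C x0 x" using assms(2) mem_component_of_iff by metis
  then show ?thesis unfolding I by (rule component_of_eq)
qed

lemma components_disjoint:
  assumes "I \<in> components V d C" "J \<in> components V d C" "I \<inter> J \<noteq> {}"
  shows "I = J"
proof -
  obtain z where "z \<in> I" "z \<in> J" using assms(3) by blast
  then show ?thesis using components_eq_component_of[OF assms(1)] components_eq_component_of[OF assms(2)]
    by metis
qed

lemma Union_components: "\<Union>(components V d C) = C"
  unfolding components_eq_image using component_of_subset[of V d C] component_of_self[of _ C V d]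
  by blast

lemma dmod_eq:
  assumes I: "is_module V d I" and J: "is_module V d J" and "I \<inter> J = {}" and u: "u \<in> I" and v: "v \<in> J"
  shows "dmod d I J = d u v"
proof -
  define i j where "i = (SOME x. x \<in> I)" and "j = (SOME y. y \<in> J)"
  have "i \<in> I" "j \<in> J" unfolding i_def j_def using u v by (metis someI_ex)+
  moreover have "u \<in> V" "v \<in> V" "i \<in> V" using u v \<open>i \<in> I\<close> is_module_subset[OF I] is_module_subset[OF J] by blast+
  moreover have "i \<notin> J" "v \<notin> I" using \<open>i \<in> I\<close> v \<open>I \<inter> J = {}\<close> by blast+
  ultimately have "d i j = d i v" "d i v = d u v"
    using is_moduleD[OF J \<open>i \<in> V\<close> \<open>i \<notin> J\<close> \<open>j \<in> J\<close> v] is_moduleD[OF I \<open>v \<in> V\<close> \<open>v \<notin> I\<close> \<open>i \<in> I\<close> u]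
    by simp_all
  then show ?thesis unfolding dmod_def i_def j_def by simp
qed

lemma strong_module_components:
  assumes "is_module V d C" "I \<in> components V d C"
  shows "strong_module V d I"
  using assms(2) strong_module_component_of[OF assms(1)] unfolding components_eq_image by blast

lemma dmod_components:
  assumes C: "is_module V d C" and IJ: "I \<in> components V d C" "J \<in> components V d C" "I \<noteq> J"
    and "u \<in> I" "v \<in> J"
  shows "dmod d I J = d u v"
proof (rule dmod_eq)
  show "is_module V d I" "is_module V d J"
    using strong_module_is_module[OF strong_module_components[OF C IJ(1)]]
      strong_module_is_module[OF strong_module_components[OF C IJ(2)]] .
  show "I \<inter> J = {}" using components_disjoint[OF IJ(1,2)] IJ(3) by blast
qed fact+

lemma Union_quotient_module:
  assumes C: "is_module V d C" and X: "is_module (components V d C) (dmod d) X"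
  shows "is_module V d (\<Union>X)"
proof (rule is_moduleI)
  have XC: "X \<subseteq> components V d C" using is_module_subset[OF X] .
  then show "\<Union>X \<subseteq> V" using Union_components[of V d C] is_module_subset[OF C] by blast
  fix w u u' assume w: "w \<in> V" "w \<notin> \<Union>X" and "u \<in> \<Union>X" "u' \<in> \<Union>X"
  then obtain I J where I: "I \<in> X" "u \<in> I" and J: "J \<in> X" "u' \<in> J" by blast
  have IJ: "I \<in> components V d C" "J \<in> components V d C" using I J XC by blast+
  have u: "u \<in> C" "u' \<in> C" using I J IJ Union_components[of V d C] by blast+
  show "d w u = d w u' \<and> d u w = d u' w"
  proof (cases "w \<in> C")
    case False
    show ?thesis using is_moduleD[OF C w(1) False u] .
  next
    case True
    define K where "K = component_of V d C w"
    have K: "K \<in> components V d C" "w \<in> K" "K \<notin> X"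
      unfolding K_def using component_of_mem_components[OF True] component_of_self[OF True] w(2) by blast+
    then have "K \<noteq> I" "K \<noteq> J" using I(1) J(1) by blast+
    then have "d w u = dmod d K I" "d u w = dmod d I K" "d w u' = dmod d K J" "d u' w = dmod d J K"
      using dmod_components[OF C] K(1,2) IJ I(2) J(2) by metis+
    moreover have "dmod d K I = dmod d K J \<and> dmod d I K = dmod d J K"
      using is_moduleD[OF X K(1) K(3) I(1) J(1)] .
    ultimately show ?thesis by simp
  qed
qed

lemma quotient_module_if_Union_module:
  assumes C: "is_module V d C" and XC: "X \<subseteq> components V d C" and U: "is_module V d (\<Union>X)"
  shows "is_module (components V d C) (dmod d) X"
proof (rule is_moduleI[OF XC])
  fix K I J assume K: "K \<in> components V d C" "K \<notin> X" and "I \<in> X" "J \<in> X"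
  then have IJ: "I \<in> components V d C" "J \<in> components V d C" "K \<noteq> I" "K \<noteq> J" using XC by blast+
  obtain k i j where kij: "k \<in> K" "i \<in> I" "j \<in> J"
    using components_nonempty K(1) IJ(1,2) by (metis all_not_in_conv)
  have "k \<notin> \<Union>X"
  proof
    assume "k \<in> \<Union>X"
    then obtain L where "L \<in> X" "k \<in> L" by blast
    then have "L = K" using components_disjoint[OF _ K(1)] XC kij(1) by blast
    then show False using \<open>L \<in> X\<close> K(2) by blast
  qed
  moreover have "k \<in> V" using kij(1) K(1) Union_components[of V d C] is_module_subset[OF C] by blast
  ultimately have "d k i = d k j \<and> d i k = d j k"
    using is_moduleD[OF U] kij(2,3) \<open>I \<in> X\<close> \<open>J \<in> X\<close> by blast
  moreover have "dmod d K I = d k i" "dmod d I K = d i k" "dmod d K J = d k j" "dmod d J K = d j k"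
    using dmod_components[OF C] K(1) IJ kij by metis+
  ultimately show "dmod d K I = dmod d K J \<and> dmod d I K = dmod d J K" by simp
qed

lemma module_eq_Union_components:
  assumes C: "is_module V d C" and N: "is_module V d N" "N \<subseteq> C"
    and not_inside: "\<And>K. K \<in> components V d C \<Longrightarrow> \<not> N \<subseteq> K"
  shows "N = \<Union>{K \<in> components V d C. K \<inter> N \<noteq> {}}"
proof
  show "N \<subseteq> \<Union>{K \<in> components V d C. K \<inter> N \<noteq> {}}" using N(2) Union_components[of V d C] by blast
  have "K \<subseteq> N" if "K \<in> components V d C" "K \<inter> N \<noteq> {}" for K
    using strong_moduleD[OF strong_module_components[OF C that(1)] N(1)] not_inside[OF that(1)] that(2)
    by blast
  then show "\<Union>{K \<in> components V d C. K \<inter> N \<noteq> {}} \<subseteq> N" by blast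
qed

lemma strong_module_Union_quotient:
  assumes C: "strong_module V d C" and SS: "strong_module (components V d C) (dmod d) SS"
  shows "strong_module V d (\<Union>SS)"
  unfolding strong_module_def
proof (intro conjI allI impI)
  have Cm: "is_module V d C" using strong_module_is_module[OF C] .
  have SSC: "SS \<subseteq> components V d C" using is_module_subset[OF strong_module_is_module[OF SS]] .
  then have UC: "\<Union>SS \<subseteq> C" using Union_components[of V d C] by blast
  show "is_module V d (\<Union>SS)" using Union_quotient_module[OF Cm strong_module_is_module[OF SS]] .
  fix N assume N: "is_module V d N"
  consider "C \<subseteq> N" | "C \<inter> N = {}" | "N \<subseteq> C" using strong_moduleD[OF C N] by blast
  then show "\<Union>SS \<subseteq> N \<or> N \<subseteq> \<Union>SS \<or> \<Union>SS \<inter> N = {}"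
  proof cases
    case 3
    show ?thesis
    proof (cases "\<exists>K\<in>components V d C. N \<subseteq> K")
      case True
      then obtain K where K: "K \<in> components V d C" "N \<subseteq> K" by blast
      have "K \<in> SS \<or> \<Union>SS \<inter> K = {}" using components_disjoint[OF _ K(1)] SSC by blast
      then show ?thesis using K(2) by blast
    next
      case False
      define NN where "NN = {K \<in> components V d C. K \<inter> N \<noteq> {}}"
      have N_eq: "N = \<Union>NN" unfolding NN_def using module_eq_Union_components[OF Cm N 3] False by blast
      have "is_module (components V d C) (dmod d) NN"
        using quotient_module_if_Union_module[OF Cm _ N[unfolded N_eq]] unfolding NN_def by blast
      then have "SS \<subseteq> NN \<or> NN \<subseteq> SS \<or> SS \<inter> NN = {}" using strong_moduleD[OF SS] by blast
      moreover have "\<Union>SS \<inter> N = {}" if "SS \<inter> NN = {}" using that SSC unfolding NN_def by blast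
      ultimately show ?thesis unfolding N_eq by blast
    qed
  qed (use UC in blast)+
qed

lemma quotient_strong_module_eq:
  assumes C: "strong_module V d C" and SS: "strong_module (components V d C) (dmod d) SS"
    and IJ: "I \<in> SS" "J \<in> SS" "I \<noteq> J"
  shows "SS = components V d C"
proof (rule ccontr)
  assume "SS \<noteq> components V d C"
  have SSC: "SS \<subseteq> components V d C" using is_module_subset[OF strong_module_is_module[OF SS]] .
  then obtain K where K: "K \<in> components V d C" "K \<notin> SS" using \<open>SS \<noteq> components V d C\<close> by blast
  then obtain k where "k \<in> K" using components_nonempty by blast
  then have "k \<in> C - \<Union>SS"
    using K components_disjoint[OF K(1)] SSC Union_components[of V d C] by blast
  then have "\<Union>SS \<subset> C" using SSC Union_components[of V d C] by blast
  \<comment> \<open>so points of \<open>I\<close> and \<open>J\<close> would lie in a common strong module properly inside \<open>C\<close>\<close>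
  obtain x y where "x \<in> I" "y \<in> J" using IJ SSC components_nonempty by (metis all_not_in_conv subsetD)
  then have "comp_rel V d C x y"
    using comp_rel_if_strong_psubset[OF strong_module_Union_quotient[OF C SS] \<open>\<Union>SS \<subset> C\<close>] IJ by blast
  then have "component_of V d C x = component_of V d C y" by (rule component_of_eq)
  then show False
    using components_eq_component_of IJ SSC \<open>x \<in> I\<close> \<open>y \<in> J\<close> by (metis subsetD)
qed

theorem degenerate_gallai_quotient:
  assumes "strong_module V d C" and "\<not> gallai_prime V d C"
  shows "degenerate (components V d C) (dmod d)"
  using degenerate_if_only_trivial_strong_modules quotient_strong_module_eq[OF assms(1)] assms(2)
  unfolding gallai_prime_def gallai_d_def by metis

lemma type_of_eq_ValuesD:
  assumes "type_of V d C = Values T"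
  shows "\<not> gallai_prime V d C"
    and "T = {dmod d I J | I J. I \<in> components V d C \<and> J \<in> components V d C \<and> I \<noteq> J}"
  using assms unfolding type_of_def by (auto split: if_splits)

lemma separated_components:
  assumes "x \<in> C" "y \<in> C" "\<not> comp_rel V d C x y"
  shows "component_of V d C x \<in> components V d C" "component_of V d C y \<in> components V d C"
    and "component_of V d C x \<noteq> component_of V d C y"
    and "x \<in> component_of V d C x" "y \<in> component_of V d C y"
  using component_of_mem_components[OF assms(1)] component_of_mem_components[OF assms(2)]
    component_of_eq_iff[OF assms(2), of V d x] assms(3) component_of_self[OF assms(1)]
    component_of_self[OF assms(2)] by blast+

lemma separated_pair_values:
  assumes C: "strong_module V d C" and T: "type_of V d C = Values T"
    and xy: "x \<in> C" "y \<in> C" "\<not> comp_rel V d C x y"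
  shows "{d x y, d y x} = T"
proof -
  have Cm: "is_module V d C" using strong_module_is_module[OF C] .
  obtain \<sigma> where \<sigma>: "\<And>I J. I \<in> components V d C \<Longrightarrow> J \<in> components V d C \<Longrightarrow> I \<noteq> J \<Longrightarrow>
      (dmod d I J, dmod d J I) \<in> {\<sigma>, prod.swap \<sigma>}"
    using degenerate_pairsE[OF degenerate_gallai_quotient[OF C type_of_eq_ValuesD(1)[OF T]]] by blast
  note IJ = separated_components[OF xy]
  have xy_dmod: "dmod d (component_of V d C x) (component_of V d C y) = d x y"
    "dmod d (component_of V d C y) (component_of V d C x) = d y x"
    using dmod_components[OF Cm] IJ by metis+
  then have "\<sigma> \<in> {(d x y, d y x), (d y x, d x y)}" using \<sigma> IJ by (cases \<sigma>) force
  then have "T \<subseteq> {d x y, d y x}"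
    unfolding type_of_eq_ValuesD(2)[OF T] using \<sigma> by (cases \<sigma>) fastforce
  moreover have "{d x y, d y x} \<subseteq> T"
    unfolding type_of_eq_ValuesD(2)[OF T] using IJ xy_dmod by force
  ultimately show ?thesis by blast
qed

lemma separated_triangle:
  assumes C: "strong_module V d C" "\<not> gallai_prime V d C" and xyz: "x \<in> C" "y \<in> C" "z \<in> C"
    and sep: "\<not> comp_rel V d C x y" "\<not> comp_rel V d C y z" "\<not> comp_rel V d C x z"
  shows "(d x y, d y x) = (d x z, d z x) \<or> (d x y, d y x) = (d z y, d y z)"
proof -
  have Cm: "is_module V d C" using strong_module_is_module[OF C(1)] .
  note xy = separated_components[OF xyz(1,2) sep(1)] and yz = separated_components[OF xyz(2,3) sep(2)]
    and xz = separated_components[OF xyz(1,3) sep(3)]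
  have "d x y = dmod d (component_of V d C x) (component_of V d C y)"
    "d y x = dmod d (component_of V d C y) (component_of V d C x)"
    "d x z = dmod d (component_of V d C x) (component_of V d C z)"
    "d z x = dmod d (component_of V d C z) (component_of V d C x)"
    "d z y = dmod d (component_of V d C z) (component_of V d C y)"
    "d y z = dmod d (component_of V d C y) (component_of V d C z)"
    using dmod_components[OF Cm] xy yz xz by metis+
  then show ?thesis
    using degenerate_triangleD[OF degenerate_gallai_quotient[OF C] xy(1,2) yz(2)] xy(3) yz(3) xz(3) by simp
qed

section \<open>Transitivity through a pivot point\<close>

text \<open>Seen from \<open>\<delta>\<close>, a point \<open>z\<close> has the signature \<open>(d z \<delta>, d \<delta> z)\<close>. In a linear quotient
  there are two signatures, "below \<open>\<delta>\<close>" and "above \<open>\<delta>\<close>", and points below relate to points above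
  as they relate to \<open>\<delta>\<close>.\<close>

definition transitive_through :: "('a \<Rightarrow> 'a \<Rightarrow> 'w) \<Rightarrow> 'a \<Rightarrow> 'a set \<Rightarrow> bool" where
  "transitive_through d \<delta> S \<longleftrightarrow> (\<forall>y\<in>S. \<forall>z\<in>S. (d y \<delta>, d \<delta> y) \<noteq> (d z \<delta>, d \<delta> z) \<longrightarrow>
     d y z = d y \<delta> \<and> d z y = d \<delta> y)"

lemma doubleton_eq_opposite: "{a, b} = {c, e} \<Longrightarrow> (a, b) \<noteq> (c, e) \<Longrightarrow> c = b \<and> e = a"
  by (auto simp: doubleton_eq_iff)

lemma opposite_signatures_transitive:
  assumes C: "strong_module V d C" "\<not> gallai_prime V d C"
    and in_C: "y \<in> C" "z \<in> C" "\<delta> \<in> C" and sep: "\<not> comp_rel V d C \<delta> z"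
    and sig: "(d y \<delta>, d \<delta> y) \<noteq> (d z \<delta>, d \<delta> z)" and same: "{d y \<delta>, d \<delta> y} = {d z \<delta>, d \<delta> z}"
  shows "d y z = d y \<delta> \<and> d z y = d \<delta> y"
proof -
  have Cm: "is_module V d C" using strong_module_is_module[OF C(1)] .
  have V: "y \<in> V" "z \<in> V" "\<delta> \<in> V" using in_C is_module_subset[OF Cm] by blast+
  have opp: "d z \<delta> = d \<delta> y" "d \<delta> z = d y \<delta>" using doubleton_eq_opposite[OF same sig] by blast+
  consider "comp_rel V d C \<delta> y" | "\<not> comp_rel V d C \<delta> y" "comp_rel V d C y z"
    | "\<not> comp_rel V d C \<delta> y" "\<not> comp_rel V d C y z" by blast
  then show ?thesis
  proof cases
    case 1
    let ?D = "component_of V d C \<delta>"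
    have "y \<in> ?D" "\<delta> \<in> ?D" "z \<notin> ?D"
      using 1 sep component_of_self[OF in_C(3), of V d] unfolding mem_component_of_iff by blast+
    then have "d z y = d z \<delta> \<and> d y z = d \<delta> z"
      using is_moduleD[OF strong_module_is_module[OF strong_module_component_of[OF Cm in_C(3)]] V(2)] by blast
    then show ?thesis using opp by simp
  next
    case 2
    let ?Y = "component_of V d C y"
    have "y \<in> ?Y" "z \<in> ?Y" "\<delta> \<notin> ?Y"
      using 2 comp_rel_sym[of V d C y \<delta>] component_of_self[OF in_C(1), of V d]
      unfolding mem_component_of_iff by blast+
    then have "d \<delta> y = d \<delta> z \<and> d y \<delta> = d z \<delta>"
      using is_moduleD[OF strong_module_is_module[OF strong_module_component_of[OF Cm in_C(1)]] V(3)] by blast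
    then show ?thesis using sig by simp
  next
    case 3
    then have "(d y z, d z y) = (d y \<delta>, d \<delta> y) \<or> (d y z, d z y) = (d \<delta> z, d z \<delta>)"
      using separated_triangle[OF C in_C(1,2,3)] sep comp_rel_sym[of V d C y \<delta>] comp_rel_sym[of V d C z \<delta>]
      by blast
    then show ?thesis using opp by auto
  qed
qed

lemma signature_class_module:
  assumes A: "is_module V d A" and D: "is_module V d D" "\<delta> \<in> D" "D \<subseteq> A"
    and transitive: "transitive_through d \<delta> (A - D)"
  shows "is_module V d (D \<union> {z \<in> A - D. (d z \<delta>, d \<delta> z) = \<sigma>})" (is "is_module V d ?M")
proof (rule is_moduleI)
  show "?M \<subseteq> V" using D(3) is_module_subset[OF A] by blast
  fix w m m' assume w: "w \<in> V" "w \<notin> ?M" and m: "m \<in> ?M" "m' \<in> ?M"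
  show "d w m = d w m' \<and> d m w = d m' w"
  proof (cases "w \<in> A")
    case False
    show ?thesis using is_moduleD[OF A w(1) False] m D(3) by blast
  next
    case True
    have like_\<delta>: "d w u = d w \<delta> \<and> d u w = d \<delta> w" if "u \<in> ?M" for u
    proof (cases "u \<in> D")
      case True
      show ?thesis using is_moduleD[OF D(1) w(1) _ True D(2)] w(2) by blast
    next
      case False
      then show ?thesis using transitive that w(2) \<open>w \<in> A\<close> unfolding transitive_through_def by auto
    qed
    show ?thesis using like_\<delta>[OF m(1)] like_\<delta>[OF m(2)] by simp
  qed
qed

lemma complement_module_if_same_signature:
  assumes A: "is_module V d A" and D: "is_module V d D" "\<delta> \<in> D"
    and same: "\<And>m. m \<in> A - D \<Longrightarrow> (d m \<delta>, d \<delta> m) = \<sigma>"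
  shows "is_module V d (A - D)"
proof (rule is_moduleI)
  show "A - D \<subseteq> V" using is_module_subset[OF A] by blast
  fix w m m' assume w: "w \<in> V" "w \<notin> A - D" and m: "m \<in> A - D" "m' \<in> A - D"
  show "d w m = d w m' \<and> d m w = d m' w"
  proof (cases "w \<in> A")
    case False
    show ?thesis using is_moduleD[OF A w(1) False] m by blast
  next
    case True
    then have "w \<in> D" using w(2) by blast
    have "m \<in> V" "m' \<in> V" using m is_module_subset[OF A] by blast+
    then have "d m w = d m \<delta> \<and> d w m = d \<delta> m" "d m' w = d m' \<delta> \<and> d w m' = d \<delta> m'"
      using is_moduleD[OF D(1) _ _ \<open>w \<in> D\<close> D(2)] m by blast+
    moreover have "(d m \<delta>, d \<delta> m) = (d m' \<delta>, d \<delta> m')" using same[OF m(1)] same[OF m(2)] by simp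
    ultimately show ?thesis by simp
  qed
qed

lemma not_transitive_through_below_strong_module:
  assumes A: "is_module V d A" and X: "strong_module V d X" "X \<subset> A"
    and D: "is_module V d D" "\<delta> \<in> D" "D \<subset> X"
  shows "\<not> transitive_through d \<delta> (A - D)"
proof
  assume transitive: "transitive_through d \<delta> (A - D)"
  define sig where "sig v = (d v \<delta>, d \<delta> v)" for v
  obtain u z where u: "u \<in> A - X" and z: "z \<in> X - D" using X(2) D(3) by blast
  \<comment> \<open>either a signature class or \<open>A - D\<close> is a module overlapping \<open>X\<close>\<close>
  show False
  proof (cases "\<exists>u\<in>A - X. \<exists>z\<in>X - D. sig u \<noteq> sig z")
    case True
    then obtain u z where u: "u \<in> A - X" and z: "z \<in> X - D" and "sig u \<noteq> sig z" by blast
    let ?M = "D \<union> {v \<in> A - D. sig v = sig u}"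
    have M: "is_module V d ?M"
      unfolding sig_def using signature_class_module[OF A D(1,2) _ transitive] D(3) X(2) by blast
    have "u \<in> ?M" "z \<notin> ?M" "\<delta> \<in> ?M \<inter> X"
      using u z \<open>sig u \<noteq> sig z\<close> D X(2) by auto
    then show False using strong_moduleD[OF X(1) M] u z by blast
  next
    case False
    then have same: "sig v = sig w" if "v \<in> A - X" "w \<in> X - D" for v w using that by blast
    have "sig m = sig z" if "m \<in> A - D" for m
      using same[OF u z] same[OF u, of m] same[of m z] z that by (cases "m \<in> X") auto
    then have M: "is_module V d (A - D)"
      unfolding sig_def using complement_module_if_same_signature[OF A D(1,2)] by blast
    have "u \<in> A - D" "z \<in> A - D" "\<delta> \<in> X - (A - D)" using u z D X(2) by auto
    then show False using strong_moduleD[OF X(1) M] u z by blast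
  qed
qed

definition separates_with_type ::
    "'a set \<Rightarrow> ('a \<Rightarrow> 'a \<Rightarrow> 'w) \<Rightarrow> 'w set \<Rightarrow> 'a set \<Rightarrow> 'a \<Rightarrow> 'a \<Rightarrow> bool" where
  "separates_with_type V d T C x y \<longleftrightarrow>
     strong_module V d C \<and> type_of V d C = Values T \<and> x \<in> C \<and> y \<in> C \<and> \<not> comp_rel V d C x y"

lemma separates_with_type_pair_values:
  assumes "separates_with_type V d T C \<delta> z"
  shows "{d z \<delta>, d \<delta> z} = T"
proof -
  have C: "strong_module V d C" "type_of V d C = Values T" "\<delta> \<in> C" "z \<in> C" "\<not> comp_rel V d C z \<delta>"
    using assms comp_rel_sym[of V d C z \<delta>] unfolding separates_with_type_def by blast+
  show ?thesis using separated_pair_values[OF C(1,2,4,3,5)] .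
qed

lemma transitive_through_if_separated:
  assumes "\<And>z. z \<in> S \<Longrightarrow> \<exists>C. separates_with_type V d T C \<delta> z"
  shows "transitive_through d \<delta> S"
  unfolding transitive_through_def
proof (intro ballI impI)
  fix y z assume "y \<in> S" "z \<in> S" and sig: "(d y \<delta>, d \<delta> y) \<noteq> (d z \<delta>, d \<delta> z)"
  then obtain C C' where y: "separates_with_type V d T C \<delta> y" and z: "separates_with_type V d T C' \<delta> z"
    using assms by blast
  have same: "{d y \<delta>, d \<delta> y} = {d z \<delta>, d \<delta> z}"
    using separates_with_type_pair_values[OF y] separates_with_type_pair_values[OF z] by simp
  have C: "strong_module V d C" "\<not> gallai_prime V d C" "\<delta> \<in> C" "y \<in> C" "\<not> comp_rel V d C \<delta> y"
    and C': "strong_module V d C'" "\<not> gallai_prime V d C'" "\<delta> \<in> C'" "z \<in> C'" "\<not> comp_rel V d C' \<delta> z"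
    using y z type_of_eq_ValuesD(1) unfolding separates_with_type_def by blast+
  \<comment> \<open>both strong modules contain \<open>\<delta>\<close>, so the larger one contains \<open>y\<close> and \<open>z\<close>\<close>
  have "C \<subseteq> C' \<or> C' \<subseteq> C" using strong_moduleD[OF C(1) strong_module_is_module[OF C'(1)]] C(3) C'(3) by blast
  then show "d y z = d y \<delta> \<and> d z y = d \<delta> y"
  proof
    assume "C \<subseteq> C'"
    then show ?thesis using opposite_signatures_transitive[OF C'(1,2) _ C'(4,3,5) sig same] C(4) by blast
  next
    assume "C' \<subseteq> C"
    then have "d z y = d z \<delta> \<and> d y z = d \<delta> z"
      using opposite_signatures_transitive[OF C(1,2) _ C(4,3,5) sig[symmetric] same[symmetric]] C'(4) by blast
    then show ?thesis using doubleton_eq_opposite[OF same sig] by simp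
  qed
qed

lemma component_has_unseparated_point:
  assumes A: "strong_module V d A" "type_of V d A = Values T" "\<delta> \<in> A" "component_of V d A \<delta> \<noteq> A"
    and D: "is_module V d D" "\<delta> \<in> D" "D \<subset> component_of V d A \<delta>"
  shows "\<exists>z \<in> component_of V d A \<delta> - D. \<nexists>C. separates_with_type V d T C \<delta> z"
proof (rule ccontr)
  assume "\<not> ?thesis"
  then have separated: "\<exists>C. separates_with_type V d T C \<delta> z" if "z \<in> component_of V d A \<delta> - D" for z
    using that by blast
  let ?X = "component_of V d A \<delta>"
  have Am: "is_module V d A" using strong_module_is_module[OF A(1)] .
  have X: "strong_module V d ?X" "?X \<subset> A"
    using strong_module_component_of[OF Am A(3)] component_of_subset[of V d A \<delta>] A(4) by blast+
  \<comment> \<open>outside \<open>?X\<close>, the module \<open>A\<close> itself separates\<close>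
  have "\<exists>C. separates_with_type V d T C \<delta> z" if "z \<in> A - D" for z
  proof (cases "z \<in> ?X")
    case False
    then have "separates_with_type V d T A \<delta> z"
      using A that unfolding separates_with_type_def mem_component_of_iff by blast
    then show ?thesis by blast
  qed (use separated that in blast)
  then have "transitive_through d \<delta> (A - D)" by (rule transitive_through_if_separated)
  then show False using not_transitive_through_below_strong_module[OF Am X D] by blast
qed

lemma S_mod_pair_between:
  assumes X: "strong_module V d X" and B: "strong_module V d B" "b \<in> B" "B \<subseteq> X" and z: "z \<in> X - B"
  shows "strong_module V d (S_mod V d {b, z})" "robust V d (S_mod V d {b, z})"
    and "B \<subset> S_mod V d {b, z}" "S_mod V d {b, z} \<subseteq> X"
proof -
  let ?C = "S_mod V d {b, z}"
  have "{b, z} \<subseteq> V" using B(2,3) z is_module_subset[OF strong_module_is_module[OF X]] by blast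
  then show C: "strong_module V d ?C" by (rule strong_module_S_mod)
  have bz: "b \<in> ?C" "z \<in> ?C" "b \<noteq> z" using S_mod_superset[of "{b, z}" V d] B(2) z by blast+
  show "robust V d ?C"
    unfolding robust_def using strong_module_is_module[OF C] bz \<open>{b, z} \<subseteq> V\<close> by blast
  show "B \<subset> ?C" using strong_moduleD[OF B(1) strong_module_is_module[OF C]] bz B(2) z by blast
  show "?C \<subseteq> X" by (rule S_mod_least[OF X]) (use B(2,3) z in blast)
qed

lemma robust_component_type_neq:
  assumes A: "strong_module V d A" "type_of V d A = Values T" "b \<in> A" "component_of V d A b \<noteq> A"
    and B: "component_of V d A b = S_mod V d {b, b'}" "b \<noteq> b'"
  shows "type_of V d (S_mod V d {b, b'}) \<noteq> Values T"
proof
  assume type_B: "type_of V d (S_mod V d {b, b'}) = Values T"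
  let ?B = "S_mod V d {b, b'}"
  let ?D = "component_of V d ?B b"
  have B_strong: "strong_module V d ?B"
    using strong_module_component_of[OF strong_module_is_module[OF A(1)] A(3)] B(1) by simp
  have "b \<in> ?B" using S_mod_superset[of "{b, b'}" V d] by blast
  have "is_module V d ?D"
    using strong_module_is_module[OF strong_module_component_of[OF strong_module_is_module[OF B_strong]
          \<open>b \<in> ?B\<close>]] .
  moreover have "b \<in> ?D" using component_of_self[OF \<open>b \<in> ?B\<close>] .
  moreover have "?D \<subset> component_of V d A b"
    using component_of_subset[of V d ?B b] component_of_S_mod_neq[OF B(2), of V d b] unfolding B(1)
    by blast
  ultimately obtain z where z: "z \<in> ?B - ?D" and unseparated: "\<nexists>C. separates_with_type V d T C b z"
    using component_has_unseparated_point[OF A] unfolding B(1) by blast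
  then have "\<not> comp_rel V d ?B b z" using mem_component_of_iff[of z V d ?B b] by blast
  then have "separates_with_type V d T ?B b z"
    using B_strong \<open>b \<in> ?B\<close> type_B z unfolding separates_with_type_def by blast
  then show False using unseparated by blast
qed

lemma robust_between_type_neq:
  assumes A: "strong_module V d A" "type_of V d A = Values T" "component_of V d A b \<noteq> A"
    and B: "strong_module V d B" "b \<in> B" "B \<subset> component_of V d A b"
  shows "\<exists>C. robust V d C \<and> B \<subset> C \<and> C \<subset> A \<and> type_of V d C \<noteq> Values T"
proof -
  let ?X = "component_of V d A b"
  have "b \<in> A" using B(2,3) component_of_subset[of V d A b] by blast
  have X: "strong_module V d ?X" "?X \<subset> A"
    using strong_module_component_of[OF strong_module_is_module[OF A(1)] \<open>b \<in> A\<close>]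
      component_of_subset[of V d A b] A(3) by blast+
  obtain z where z: "z \<in> ?X - B" and unseparated: "\<nexists>C. separates_with_type V d T C b z"
    using component_has_unseparated_point[OF A(1,2) \<open>b \<in> A\<close> A(3) strong_module_is_module[OF B(1)] B(2,3)]
    by blast
  note C = S_mod_pair_between[OF X(1) B(1,2) psubset_imp_subset[OF B(3)] z]
  have "b \<noteq> z" using z B(2) by blast
  moreover have "b \<in> S_mod V d {b, z}" "z \<in> S_mod V d {b, z}"
    using S_mod_superset[of "{b, z}" V d] by blast+
  ultimately have "type_of V d (S_mod V d {b, z}) \<noteq> Values T"
    using unseparated C(1) not_comp_rel_S_mod[OF \<open>b \<noteq> z\<close>, of V d] unfolding separates_with_type_def by blast
  then show ?thesis using C(2-4) X(2) by blast
qed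

theorem proposition6p10:
  fixes V :: "'a set" and d :: "'a \<Rightarrow> 'a \<Rightarrow> 'w" and A B :: "'a set"
  assumes "robust V d A" and "robust V d B"
    and "\<exists>x\<in>A. \<exists>y\<in>A. x \<noteq> y" and "\<exists>x\<in>B. \<exists>y\<in>B. x \<noteq> y"
    and "B \<subset> A"
    and "\<not> gallai_prime V d A" and "\<not> gallai_prime V d B"
    and "type_of V d A = type_of V d B"
  shows "\<exists>C. robust V d C \<and> B \<subset> C \<and> C \<subset> A \<and> type_of V d C \<noteq> type_of V d A"
proof -
  obtain T where T: "type_of V d A = Values T" using assms(6) unfolding type_of_def by simp
  obtain a a' where a: "a \<in> V" "a' \<in> V" "a \<noteq> a'" "A = S_mod V d {a, a'}"
    using robust_two_points[OF assms(1)] assms(3) by blast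
  obtain b b' where b: "b \<in> V" "b' \<in> V" "b \<noteq> b'" "B = S_mod V d {b, b'}"
    using robust_two_points[OF assms(2)] assms(4) by blast
  have A: "strong_module V d A" and B: "strong_module V d B"
    using strong_module_S_mod[of "{a, a'}" V d] strong_module_S_mod[of "{b, b'}" V d] a b by simp_all
  have "b \<in> B" using S_mod_superset[of "{b, b'}" V d] b(4) by blast
  then have "b \<in> A" and X: "component_of V d A b \<noteq> A" "B \<subseteq> component_of V d A b"
    using assms(5) component_of_S_mod_neq[OF a(3)] a(4) subset_component_of[OF B assms(5)] by blast+
  show ?thesis
  proof (cases "component_of V d A b = B")
    case True
    \<comment> \<open>then the hypothesis \<open>t(A) = t(B)\<close> is already contradictory\<close>
    then show ?thesis using robust_component_type_neq[OF A T \<open>b \<in> A\<close> X(1) _ b(3)] assms(8) T b(4) by simp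
  next
    case False
    then show ?thesis using robust_between_type_neq[OF A T X(1) B \<open>b \<in> B\<close>] X(2) T by auto
  qed
qed

end
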